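(* Let $\mathfrak p$ be a standard parabolic subalgebra of $\mathfrak g$ and $j\in\{1,\dots,n\}$. Then $w_j\in W^{\mathfrak p}$ if and only if $\alpha_j\notin\Sigma_{\mathfrak p}$. Moreover, for every $v\in W_+^{\mathfrak p}$ and every $w\in W^{\mathfrak p}$ we have $vw\in W^{\mathfrak p}$.
   Context: Let $\mathfrak g=\mathfrak{sl}_{n+1}(\mathbb C)$, $n\ge1$, $\Delta_+=\{\varepsilon_i-\varepsilon_j:i<j\}$, $\Delta_-=-\Delta_+$, $\Pi=\{\alpha_1,\dots,\alpha_n\}$, $\alpha_i=\varepsilon_i-\varepsilon_{i+1}$, $\theta=\alpha_1+\dots+\alpha_n$; $W$ the Weyl group generated by the simple reflections $s_i$. For $\Sigma\subset\Pi$, $\Delta_\Sigma$ is the root subsystem generated by $\Sigma$, $\mathfrak p_\Sigma$ the standard parabolic subalgebra, $\Sigma_{\mathfrak p_\Sigma}=\Sigma$, and $W^{\mathfrak p_\Sigma}=\{w\in W:\Delta_+\cap w(\Delta_-)\subset\Delta_+\setminus\Delta_\Sigma\}$. For $j=1,\dots,n$, $w_j\in W$ is the unique element preserving the set $\{\alpha_1,\dots,\alpha_n,-\theta\}$ with $w_j(-\theta)=\alpha_j$ (equivalently $w_j=(s_1s_2\cdots s_n)^j$); $W_+=\{e,w_1,\dots,w_n\}$ and $W_+^{\mathfrak p_\Sigma}=\{w\in W_+:w(\Sigma)=\Sigma\}$. *)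

theory Defs
  imports "HOL-Combinatorics.Combinatorics" "HOL-Library.Function_Algebras"
begin

text \<open>Type A_n: g = sl_(n+1).  Weights are integer vectors indexed by 1..n+1
  (functions nat => int); eps i is the i-th standard basis vector.\<close>

definition eps :: "nat \<Rightarrow> nat \<Rightarrow> int" where
  "eps i = (\<lambda>k. if k = i then 1 else 0)"

definition roots :: "nat \<Rightarrow> (nat \<Rightarrow> int) set" where
  "roots n = {eps i - eps j | i j. i \<in> {1..n+1} \<and> j \<in> {1..n+1} \<and> i \<noteq> j}"

definition pos_roots :: "nat \<Rightarrow> (nat \<Rightarrow> int) set" where
  "pos_roots n = {eps i - eps j | i j. i \<in> {1..n+1} \<and> j \<in> {1..n+1} \<and> i < j}"

definition neg_roots :: "nat \<Rightarrow> (nat \<Rightarrow> int) set" where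
  "neg_roots n = uminus ` pos_roots n"

definition alpha :: "nat \<Rightarrow> nat \<Rightarrow> int" where
  "alpha i = eps i - eps (Suc i)"

definition simple_roots :: "nat \<Rightarrow> (nat \<Rightarrow> int) set" where
  "simple_roots n = alpha ` {1..n}"

definition theta :: "nat \<Rightarrow> nat \<Rightarrow> int" where
  "theta n = eps 1 - eps (n+1)"

definition root_subsystem :: "nat \<Rightarrow> (nat \<Rightarrow> int) set \<Rightarrow> (nat \<Rightarrow> int) set" where
  "root_subsystem n \<Sigma> =
     {\<beta> \<in> roots n. \<exists>c :: (nat \<Rightarrow> int) \<Rightarrow> int. \<beta> = (\<Sum>a\<in>\<Sigma>. (\<lambda>k. c a * a k))}"

text \<open>Weyl group: the symmetric group on {1..n+1}, acting by w(eps i) = eps (w i).\<close>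
definition weyl :: "nat \<Rightarrow> (nat \<Rightarrow> nat) set" where
  "weyl n = {w. w permutes {1..n+1}}"

definition act :: "(nat \<Rightarrow> nat) \<Rightarrow> (nat \<Rightarrow> int) \<Rightarrow> (nat \<Rightarrow> int)" where
  "act w \<beta> = (\<lambda>k. \<beta> (inv w k))"

definition sref :: "nat \<Rightarrow> nat \<Rightarrow> nat" where
  "sref i = transpose i (Suc i)"

definition wJ :: "nat \<Rightarrow> nat \<Rightarrow> nat \<Rightarrow> nat" where
  "wJ n j = (foldr (\<circ>) (map sref [1..<n+1]) id) ^^ j"

definition Wplus :: "nat \<Rightarrow> (nat \<Rightarrow> nat) set" where
  "Wplus n = insert id (wJ n ` {1..n})"

definition Wpar :: "nat \<Rightarrow> (nat \<Rightarrow> int) set \<Rightarrow> (nat \<Rightarrow> nat) set" where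
  "Wpar n \<Sigma> = {w \<in> weyl n.
      pos_roots n \<inter> act w ` neg_roots n \<subseteq> pos_roots n - root_subsystem n \<Sigma>}"

definition Wplus_par :: "nat \<Rightarrow> (nat \<Rightarrow> int) set \<Rightarrow> (nat \<Rightarrow> nat) set" where
  "Wplus_par n \<Sigma> = {w \<in> Wplus n. act w ` \<Sigma> = \<Sigma>}"

end

theory Submission imports Defs begin

text \<open>
  With W the permutations of {1..n+1}, w lies in W^p iff no inversion of w (a pair
  y < x with w x < w y) has its root eps (w x) - eps (w y) in the subsystem generated
  by \<Sigma>. The element w_j is the rotation k \<mapsto> k + j mod n+1, which preserves the order
  of two points unless their images lie on different sides of the cut between j and
  j+1. If alpha j \<notin> \<Sigma>, the coordinate sum up to j vanishes on the span of \<Sigma>, so no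
  root eps a - eps b with a \<le> j < b lies in the subsystem and w_j is minimal; the
  inversion (n+1, 1) of w_j, on the other hand, has root alpha j. If w_j stabilises
  \<Sigma>, then alpha j \<notin> \<Sigma> (only alpha (n+1) could be moved to alpha j), and since the
  subsystem is w_j-invariant, a bad inversion of w_j w would be a bad inversion of w.
\<close>

lemma sum_apply: "(\<Sum>x\<in>S. f x) k = (\<Sum>x\<in>S. f x k)"
  for f :: "'a \<Rightarrow> 'b \<Rightarrow> 'c::comm_monoid_add"
  by (induction S rule: infinite_finite_induct) auto

lemma eps_diff_inject:
  assumes "a \<noteq> b" "eps a - eps b = eps c - eps d"
  shows "a = c \<and> b = d"
proof -
  have "(eps a - eps b) a = (eps c - eps d) a" "(eps a - eps b) b = (eps c - eps d) b"
    using assms(2) by simp_all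
  then show ?thesis using assms(1) unfolding eps_def by (auto split: if_splits)
qed

lemma sum_atMost_eps: "(\<Sum>k\<le>j. eps i k) = (if i \<le> j then 1 else 0)"
  unfolding eps_def by simp

lemma alpha_mem_roots: "j \<in> {1..n} \<Longrightarrow> alpha j \<in> roots n"
  unfolding roots_def alpha_def by force

lemma finite_simple_roots: "finite (simple_roots n)"
  unfolding simple_roots_def by simp

lemma act_eps:
  assumes "bij w"
  shows "act w (eps i) = eps (w i)"
proof -
  have "inv w k = i \<longleftrightarrow> k = w i" for k using bij_inv_eq_iff[OF assms, of i] by metis
  then show ?thesis unfolding act_def eps_def by (simp add: fun_eq_iff)
qed

lemma act_diff: "act w (f - g) = act w f - act w g"
  unfolding act_def by auto

lemma act_sum: "act w (\<Sum>x\<in>S. f x) = (\<Sum>x\<in>S. act w (f x))"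
  unfolding act_def by (rule ext) (simp only: sum_apply)

lemma inj_act: "bij w \<Longrightarrow> inj (act w)"
proof (rule injI)
  fix f g assume "bij w" "act w f = act w g"
  then have "act w f (w k) = act w g (w k)" for k by simp
  then show "f = g" using \<open>bij w\<close> by (simp add: act_def fun_eq_iff bij_is_inj)
qed

definition coxeter_cycle :: "nat \<Rightarrow> nat \<Rightarrow> nat" where
  "coxeter_cycle n = foldr (\<circ>) (map sref [1..<n+1]) id"

lemma foldr_comp_eq_comp: "foldr (\<circ>) fs g = foldr (\<circ>) fs id \<circ> g"
  by (induction fs) auto

lemma coxeter_cycle_Suc: "coxeter_cycle (Suc n) = coxeter_cycle n \<circ> sref (Suc n)"
proof -
  have "[1..<Suc n + 1] = [1..<n+1] @ [Suc n]" by simp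
  then show ?thesis unfolding coxeter_cycle_def
    by (simp only: map_append foldr_append) (simp add: foldr_comp_eq_comp[of _ "sref _"])
qed

lemma coxeter_cycle_apply:
  "coxeter_cycle n k = (if 1 \<le> k \<and> k \<le> n then k + 1 else if k = n + 1 then 1 else k)"
proof (induction n arbitrary: k)
  case 0
  then show ?case by (simp add: coxeter_cycle_def)
next
  case (Suc n)
  then show ?case unfolding coxeter_cycle_Suc by (auto simp: sref_def transpose_def)
qed

lemma coxeter_cycle_permutes: "coxeter_cycle n permutes {1..n+1}"
proof (induction n)
  case 0
  then show ?case by (simp add: coxeter_cycle_def permutes_def)
next
  case (Suc n)
  have "coxeter_cycle n permutes {1..Suc n + 1}"
    using Suc.IH by (rule permutes_subset) auto
  moreover have "sref (Suc n) permutes {1..Suc n + 1}"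
    unfolding sref_def by (intro permutes_swap_id) auto
  ultimately show ?case
    unfolding coxeter_cycle_Suc by (rule permutes_compose[rotated])
qed

lemma wJ_eq_funpow: "wJ n j = coxeter_cycle n ^^ j"
  by (simp add: wJ_def coxeter_cycle_def)

lemma wJ_permutes: "wJ n j permutes {1..n+1}"
  unfolding wJ_eq_funpow by (rule permutes_funpow[OF coxeter_cycle_permutes])

lemma wJ_apply:
  assumes "j \<le> n + 1" "k \<in> {1..n+1}"
  shows "wJ n j k = (if k + j \<le> n + 1 then k + j else k + j - (n + 1))"
  using assms(1) unfolding wJ_eq_funpow
proof (induction j)
  case 0
  then show ?case using assms(2) by simp
next
  case (Suc j)
  then show ?case using assms(2) by (auto simp: coxeter_cycle_apply)
qed

lemma wJ_less_wJ_imp_less: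
  assumes "j \<le> n + 1" "a \<in> {1..n+1}" "b \<in> {1..n+1}"
    and "wJ n j a < wJ n j b" "\<not> (wJ n j a \<le> j \<and> j < wJ n j b)"
  shows "a < b"
  using assms by (auto simp: wJ_apply split: if_splits)

lemma pos_roots_inter_act_neg_roots:
  assumes "w permutes {1..n+1}"
  shows "pos_roots n \<inter> act w ` neg_roots n =
    {eps (w x) - eps (w y) | x y. x \<in> {1..n+1} \<and> y \<in> {1..n+1} \<and> y < x \<and> w x < w y}"
    (is "?L = ?R")
proof
  have bw: "bij w" using assms by (rule permutes_bij)
  have act_root: "act w (eps x - eps y) = eps (w x) - eps (w y)" for x y
    by (simp add: act_diff act_eps[OF bw])
  show "?L \<subseteq> ?R"
  proof
    fix \<beta> assume "\<beta> \<in> ?L"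
    then obtain a b x y where "\<beta> = eps a - eps b" "a < b"
      and \<beta>: "\<beta> = act w (eps x - eps y)" "x \<in> {1..n+1}" "y \<in> {1..n+1}" "y < x"
      unfolding pos_roots_def neg_roots_def by (auto simp: minus_diff_eq)
    then have "a = w x \<and> b = w y"
      using eps_diff_inject[of a b "w x" "w y"] by (simp add: act_root)
    with \<beta> \<open>a < b\<close> show "\<beta> \<in> ?R" unfolding act_root by blast
  qed
  show "?R \<subseteq> ?L"
  proof
    fix \<beta> assume "\<beta> \<in> ?R"
    then obtain x y where \<beta>: "\<beta> = eps (w x) - eps (w y)"
      and xy: "x \<in> {1..n+1}" "y \<in> {1..n+1}" "y < x" "w x < w y" by blast
    have "w x \<in> {1..n+1}" "w y \<in> {1..n+1}"
      using permutes_in_image[OF assms] xy(1,2) by blast+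
    then have "\<beta> \<in> pos_roots n" unfolding \<beta> pos_roots_def using xy(4) by blast
    moreover have "eps x - eps y \<in> neg_roots n"
      unfolding neg_roots_def pos_roots_def using xy(1-3) by force
    ultimately show "\<beta> \<in> ?L" unfolding \<beta> act_root[symmetric] by blast
  qed
qed

lemma in_Wpar_iff:
  assumes "w permutes {1..n+1}"
  shows "w \<in> Wpar n \<Sigma> \<longleftrightarrow> (\<forall>x\<in>{1..n+1}. \<forall>y\<in>{1..n+1}.
           y < x \<longrightarrow> w x < w y \<longrightarrow> eps (w x) - eps (w y) \<notin> root_subsystem n \<Sigma>)"
proof -
  have "w \<in> Wpar n \<Sigma> \<longleftrightarrow> pos_roots n \<inter> act w ` neg_roots n \<inter> root_subsystem n \<Sigma> = {}"
    using assms unfolding Wpar_def weyl_def by blast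
  then show ?thesis unfolding pos_roots_inter_act_neg_roots[OF assms] by blast
qed

lemma root_in_root_subsystem:
  assumes "finite \<Sigma>" "\<alpha> \<in> \<Sigma>" "\<alpha> \<in> roots n"
  shows "\<alpha> \<in> root_subsystem n \<Sigma>"
proof -
  have "\<alpha> = (\<Sum>a\<in>\<Sigma>. (\<lambda>k. of_bool (a = \<alpha>) * a k))"
    using assms(1,2) by (intro ext) (simp add: sum_apply)
  then show ?thesis using assms(3) unfolding root_subsystem_def by fastforce
qed

lemma sum_atMost_root_subsystem:
  assumes "\<Sigma> \<subseteq> simple_roots n" "alpha j \<notin> \<Sigma>" "\<beta> \<in> root_subsystem n \<Sigma>"
  shows "(\<Sum>k\<le>j. \<beta> k) = 0"
proof -
  obtain c where c: "\<beta> = (\<Sum>a\<in>\<Sigma>. (\<lambda>k. c a * a k))"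
    using assms(3) unfolding root_subsystem_def by blast
  have "(\<Sum>k\<le>j. \<beta> k) = (\<Sum>a\<in>\<Sigma>. c a * (\<Sum>k\<le>j. a k))"
    unfolding c sum_apply by (simp add: sum.swap[of _ _ \<Sigma>] sum_distrib_left)
  also have "\<dots> = 0"
  proof (rule sum.neutral, rule ballI)
    fix a assume "a \<in> \<Sigma>"
    then obtain i where "a = alpha i" "i \<noteq> j"
      using assms(1,2) unfolding simple_roots_def by auto
    then have "(\<Sum>k\<le>j. a k) = 0"
      unfolding alpha_def by (simp add: sum_subtractf sum_atMost_eps)
    then show "c a * (\<Sum>k\<le>j. a k) = 0" by simp
  qed
  finally show ?thesis .
qed

lemma eps_diff_in_root_subsystem_same_side:
  assumes "\<Sigma> \<subseteq> simple_roots n" "alpha j \<notin> \<Sigma>" "eps a - eps b \<in> root_subsystem n \<Sigma>"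
  shows "\<not> (a \<le> j \<and> j < b)"
proof -
  have "(\<Sum>k\<le>j. (eps a - eps b) k) = 0" by (rule sum_atMost_root_subsystem[OF assms])
  then show ?thesis by (simp add: sum_subtractf sum_atMost_eps split: if_splits)
qed

lemma root_subsystem_pullback:
  assumes "bij v" "act v ` \<Sigma> = \<Sigma>" "\<beta> \<in> roots n" "act v \<beta> \<in> root_subsystem n \<Sigma>"
  shows "\<beta> \<in> root_subsystem n \<Sigma>"
proof -
  obtain c where c: "act v \<beta> = (\<Sum>x\<in>\<Sigma>. (\<lambda>k. c x * x k))"
    using assms(4) unfolding root_subsystem_def by blast
  have "inj_on (act v) \<Sigma>" using inj_act[OF assms(1)] by (rule inj_on_subset) simp
  then have "(\<Sum>x\<in>\<Sigma>. (\<lambda>k. c x * x k)) = (\<Sum>y\<in>\<Sigma>. (\<lambda>k. c (act v y) * act v y k))"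
    by (subst (1) assms(2)[symmetric]) (simp only: sum.reindex o_def)
  also have "\<dots> = act v (\<Sum>y\<in>\<Sigma>. (\<lambda>k. c (act v y) * y k))"
    by (simp only: act_sum) (simp add: act_def)
  finally have "\<beta> = (\<Sum>y\<in>\<Sigma>. (\<lambda>k. c (act v y) * y k))"
    using c inj_act[OF assms(1)] by (simp add: inj_eq)
  then show ?thesis using assms(3) unfolding root_subsystem_def by fastforce
qed

lemma wJ_in_Wpar_iff:
  assumes \<Sigma>: "\<Sigma> \<subseteq> simple_roots n" and j: "j \<in> {1..n}"
  shows "wJ n j \<in> Wpar n \<Sigma> \<longleftrightarrow> alpha j \<notin> \<Sigma>"
proof
  have cut: "wJ n j (n + 1) = j" "wJ n j 1 = Suc j" using j by (simp_all add: wJ_apply)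
  assume "wJ n j \<in> Wpar n \<Sigma>"
  then have "eps (wJ n j (n + 1)) - eps (wJ n j 1) \<notin> root_subsystem n \<Sigma>"
    by (rule in_Wpar_iff[OF wJ_permutes, THEN iffD1, rule_format]) (use j cut in auto)
  then have "alpha j \<notin> root_subsystem n \<Sigma>" unfolding cut alpha_def .
  then show "alpha j \<notin> \<Sigma>"
    using root_in_root_subsystem[OF finite_subset[OF \<Sigma> finite_simple_roots]]
      alpha_mem_roots[OF j] by blast
next
  assume no_cut: "alpha j \<notin> \<Sigma>"
  show "wJ n j \<in> Wpar n \<Sigma>"
    unfolding in_Wpar_iff[OF wJ_permutes]
  proof (intro ballI impI notI)
    fix x y assume "x \<in> {1..n+1}" "y \<in> {1..n+1}" "y < x" "wJ n j x < wJ n j y"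
      and "eps (wJ n j x) - eps (wJ n j y) \<in> root_subsystem n \<Sigma>"
    then have "x < y"
      using eps_diff_in_root_subsystem_same_side[OF \<Sigma> no_cut] wJ_less_wJ_imp_less[of j n x y] j
      by auto
    with \<open>y < x\<close> show False by simp
  qed
qed

lemma wJ_stabilises_imp_alpha_notin:
  assumes \<Sigma>: "\<Sigma> \<subseteq> simple_roots n" and j: "j \<in> {1..n}" and stable: "act (wJ n j) ` \<Sigma> = \<Sigma>"
  shows "alpha j \<notin> \<Sigma>"
proof
  assume "alpha j \<in> \<Sigma>"
  then obtain i where i: "i \<in> {1..n}" "alpha j = act (wJ n j) (alpha i)"
    using stable \<Sigma> unfolding simple_roots_def by (metis imageE subsetD)
  then have "eps j - eps (Suc j) = eps (wJ n j i) - eps (wJ n j (Suc i))"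
    unfolding alpha_def by (simp add: act_diff act_eps permutes_bij[OF wJ_permutes])
  then have "j = wJ n j i" by (rule conjunct1[OF eps_diff_inject[OF n_not_Suc_n]])
  moreover have "wJ n j i = (if i + j \<le> n + 1 then i + j else i + j - (n + 1))"
    using i j by (intro wJ_apply) auto
  ultimately show False using i j by (auto split: if_splits)
qed

lemma wJ_comp_in_Wpar:
  assumes \<Sigma>: "\<Sigma> \<subseteq> simple_roots n" and j: "j \<in> {1..n}"
    and stable: "act (wJ n j) ` \<Sigma> = \<Sigma>" and w: "w \<in> Wpar n \<Sigma>"
  shows "wJ n j \<circ> w \<in> Wpar n \<Sigma>"
proof -
  let ?v = "wJ n j"
  have pw: "w permutes {1..n+1}" using w unfolding Wpar_def weyl_def by blast
  have bv: "bij ?v" by (rule permutes_bij[OF wJ_permutes])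
  have no_cut: "alpha j \<notin> \<Sigma>" by (rule wJ_stabilises_imp_alpha_notin[OF \<Sigma> j stable])
  show ?thesis unfolding in_Wpar_iff[OF permutes_compose[OF pw wJ_permutes]]
  proof (intro ballI impI notI)
    fix x y assume x: "x \<in> {1..n+1}" and y: "y \<in> {1..n+1}" and "y < x"
      and lt: "(?v \<circ> w) x < (?v \<circ> w) y"
      and R: "eps ((?v \<circ> w) x) - eps ((?v \<circ> w) y) \<in> root_subsystem n \<Sigma>"
    have wx: "w x \<in> {1..n+1}" and wy: "w y \<in> {1..n+1}"
      using permutes_in_image[OF pw] x y by blast+
    have "\<not> (?v (w x) \<le> j \<and> j < ?v (w y))"
      using eps_diff_in_root_subsystem_same_side[OF \<Sigma> no_cut] R by simp
    then have "w x < w y" using wJ_less_wJ_imp_less[of j n "w x" "w y"] j wx wy lt by simp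
    moreover have "eps (w x) - eps (w y) \<in> roots n"
      unfolding roots_def using wx wy \<open>w x < w y\<close> by fastforce
    ultimately have "eps (w x) - eps (w y) \<in> root_subsystem n \<Sigma>"
      using root_subsystem_pullback[OF bv stable] R by (simp add: act_diff act_eps[OF bv])
    then show False using w \<open>y < x\<close> \<open>w x < w y\<close> x y unfolding in_Wpar_iff[OF pw] by blast
  qed
qed

theorem mainTheorem9:
  fixes n :: nat and \<Sigma> :: "(nat \<Rightarrow> int) set"
  assumes "n \<ge> 1" and "\<Sigma> \<subseteq> simple_roots n"
  shows "(\<forall>j\<in>{1..n}. wJ n j \<in> Wpar n \<Sigma> \<longleftrightarrow> alpha j \<notin> \<Sigma>)
       \<and> (\<forall>v\<in>Wplus_par n \<Sigma>. \<forall>w\<in>Wpar n \<Sigma>. v \<circ> w \<in> Wpar n \<Sigma>)"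
proof
  show "\<forall>j\<in>{1..n}. wJ n j \<in> Wpar n \<Sigma> \<longleftrightarrow> alpha j \<notin> \<Sigma>"
    using wJ_in_Wpar_iff[OF assms(2)] by blast
  show "\<forall>v\<in>Wplus_par n \<Sigma>. \<forall>w\<in>Wpar n \<Sigma>. v \<circ> w \<in> Wpar n \<Sigma>"
  proof (intro ballI)
    fix v w assume "v \<in> Wplus_par n \<Sigma>" and w: "w \<in> Wpar n \<Sigma>"
    then consider "v = id" | j where "j \<in> {1..n}" "v = wJ n j" "act (wJ n j) ` \<Sigma> = \<Sigma>"
      unfolding Wplus_par_def Wplus_def by blast
    then show "v \<circ> w \<in> Wpar n \<Sigma>"
      by cases (use w wJ_comp_in_Wpar[OF assms(2)] in auto)
  qed
qed

end
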